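(* For all real $\alpha,\beta,\alpha',\beta'$ with $\beta\neq0$ and $\beta'\neq0$, every integer $n\ge0$ and every real $x$, \[ P_n^{(\alpha,\beta)}(x)=\sum_{j=0}^{n}(-1)^jS_{\alpha-\frac{\alpha'}{\beta'}\beta,\ \frac{\beta}{\beta'}}(n,j)\,P_j^{(\alpha',\beta')}(x). \] In particular, taking $(\alpha',\beta')=(-\alpha,-\beta)$, \[ P_n^{(\alpha,\beta)}(x)=\sum_{j=0}^{n}(-1)^jL(n,j)\,P_j^{(-\alpha,-\beta)}(x), \] where $L(n,j)$ are the (unsigned) Lah numbers: $L(0,0)=1$, $L(n,0)=0$ for $n\ge1$, and $L(n,j)=\binom{n-1}{j-1}\frac{n!}{j!}$ for $1\le j\le n$.
   Context: For real $a$ and integer $n\ge 1$, $\langle a\rangle_n:=a(a+1)\cdots(a+n-1)$ and $\langle a\rangle_0:=1$. For real $\alpha,\beta$ and integers $0\le k\le n$, $S_{\alpha,\beta}(n,k):=\frac{1}{k!}\sum_{j=0}^{k}(-1)^{k-j}\binom{k}{j}\langle-\alpha-\beta j\rangle_n$. For real $\alpha,\beta$ with $\beta\neq0$, the polynomials $P_n^{(\alpha,\beta)}(x)$ are defined by $\sum_{n\ge0}P_n^{(\alpha,\beta)}(x)\frac{t^n}{n!}=(1-t)^{\alpha}\exp\big(x((1-t)^{\beta}-1)\big)$ (formal power series in $t$). *)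

theory Defs
  imports "HOL-Computational_Algebra.Formal_Power_Series"
begin

definition genS :: "real \<Rightarrow> real \<Rightarrow> nat \<Rightarrow> nat \<Rightarrow> real" where
  "genS a b n k = (1 / fact k) *
     (\<Sum>j = 0..k. (-1) ^ (k - j) * real (k choose j) * pochhammer (- a - b * real j) n)"

definition one_minus_pow :: "real \<Rightarrow> real fps" where
  "one_minus_pow a = fps_binomial a oo (- fps_X)"

definition Pgen :: "real \<Rightarrow> real \<Rightarrow> real \<Rightarrow> real fps" where
  "Pgen a b x = one_minus_pow a * (fps_exp x oo (one_minus_pow b - 1))"

definition Ppoly :: "nat \<Rightarrow> real \<Rightarrow> real \<Rightarrow> real \<Rightarrow> real" where
  "Ppoly n a b x = fact n * fps_nth (Pgen a b x) n"

definition Lah :: "nat \<Rightarrow> nat \<Rightarrow> real" where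
  "Lah n j = (if n = 0 \<and> j = 0 then 1
              else if 1 \<le> j \<and> j \<le> n then real ((n - 1) choose (j - 1)) * fact n / fact j
              else 0)"

end

theory Submission
  imports Defs
begin

unbundle fps_syntax

text \<open>
  Write E(c) = (1 - t)^c. Composing E(c) with s = 1 - E(d) gives E(c d), so substituting
  s = 1 - E(\<beta>/\<beta>') into the generating function of the P^(\<alpha>',\<beta>') yields
  E(\<alpha>' \<beta>/\<beta>') exp(x (E(\<beta>) - 1)); hence the generating function of the P^(\<alpha>,\<beta>) is
  E(\<alpha> - \<alpha>' \<beta>/\<beta>') times the sum of P_j^(\<alpha>',\<beta>')(x) s^j / j!. Expanding E(c) s^j by the
  binomial theorem, its n-th coefficient is (-1)^j j! S_{c,d}(n,j) / n!. For (c, d) = (0, -1)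
  one has 1 - E(-1) = -t/(1 - t), whose powers have the Lah numbers as coefficients.
\<close>

lemma fps_deriv_binomial:
  fixes c :: "'a::field_char_0"
  shows "fps_deriv (fps_binomial c) = fps_const c * fps_binomial (c - 1)"
proof -
  have "fps_deriv (fps_binomial c) = fps_const c * (fps_binomial c * fps_binomial (-1))"
    by (simp add: fps_binomial_deriv fps_divide_unit fps_binomial_minus_one mult.assoc)
  then show ?thesis
    by (simp add: fps_binomial_add_mult[symmetric])
qed

lemma fps_binomial_compose_binomial_minus_one:
  fixes p d :: "'a::field_char_0"
  shows "fps_binomial p oo (fps_binomial d - 1) = fps_binomial (p * d)"
proof -
  let ?h = "fps_binomial d - 1"
  let ?G = "fps_binomial p oo ?h"
  have h0: "?h $ 0 = 0" by simp
  have G_eq: "(fps_binomial (p - 1) oo ?h) * fps_binomial d = ?G"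
  proof -
    have "fps_binomial 1 oo ?h = fps_binomial d"
      by (simp add: fps_binomial_1 fps_compose_add_distrib h0)
    then show ?thesis
      using fps_compose_mult_distrib[OF h0, of "fps_binomial (p - 1)" "fps_binomial 1"]
      by (simp add: fps_binomial_add_mult[symmetric])
  qed
  have d_eq: "fps_binomial (d - 1) * (1 + fps_X) = fps_binomial d"
    by (simp add: fps_binomial_1[symmetric] fps_binomial_add_mult[symmetric])
  have "fps_deriv ?G * (1 + fps_X)
      = fps_const p * fps_const d * ((fps_binomial (p - 1) oo ?h) * (fps_binomial (d - 1) * (1 + fps_X)))"
    by (simp add: fps_compose_deriv[OF h0] fps_deriv_binomial fps_compose_mult_distrib[OF h0]
        fps_const_compose mult_ac)
  also have "\<dots> = fps_const (p * d) * ?G"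
    by (simp add: d_eq G_eq)
  finally have ode: "fps_deriv ?G * (1 + fps_X) = fps_const (p * d) * ?G" .
  have "(1 + fps_X :: 'a fps) \<noteq> 0"
    by (metis fps_add_nth fps_one_nth fps_X_nth fps_zero_nth add.right_neutral one_neq_zero)
  then have "fps_deriv ?G = fps_const (p * d) * ?G / (1 + fps_X)"
    by (simp add: ode[symmetric])
  then show ?thesis
    using fps_binomial_ODE_unique'[of ?G "p * d"] by simp
qed

lemma fps_nth_mult_compose:
  fixes M P s :: "'a::comm_ring_1 fps"
  assumes s0: "s $ 0 = 0"
  shows "(M * (P oo s)) $ n = (\<Sum>j = 0..n. P $ j * (M * s ^ j) $ n)"
proof -
  have inner: "(\<Sum>j = 0..n - i. P $ j * (s ^ j) $ (n - i)) = (\<Sum>j = 0..n. P $ j * (s ^ j) $ (n - i))"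
    for i
    by (rule sum.mono_neutral_left) (auto simp: startsby_zero_power_prefix[OF s0])
  have "(M * (P oo s)) $ n = (\<Sum>i = 0..n. M $ i * (\<Sum>j = 0..n. P $ j * (s ^ j) $ (n - i)))"
    by (simp add: fps_mult_nth fps_compose_nth inner)
  also have "\<dots> = (\<Sum>j = 0..n. P $ j * (\<Sum>i = 0..n. M $ i * (s ^ j) $ (n - i)))"
    unfolding sum_distrib_left by (subst sum.swap) (simp add: mult_ac)
  finally show ?thesis
    by (simp add: fps_mult_nth)
qed

lemma one_minus_pow_nth: "one_minus_pow e $ n = pochhammer (- e) n / fact n"
  by (simp add: one_minus_pow_def fps_compose_uminus' gbinomial_pochhammer)

lemma one_minus_pow_0 [simp]: "one_minus_pow 0 = 1"
  by (simp add: one_minus_pow_def)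

lemma one_minus_pow_add: "one_minus_pow (a + b) = one_minus_pow a * one_minus_pow b"
  by (simp add: one_minus_pow_def fps_binomial_add_mult fps_compose_mult_distrib)

lemma one_minus_pow_power: "one_minus_pow e ^ k = one_minus_pow (real k * e)"
  by (induction k) (simp_all add: one_minus_pow_add[symmetric] algebra_simps)

lemma one_minus_pow_compose: "one_minus_pow p oo (1 - one_minus_pow d) = one_minus_pow (p * d)"
proof -
  let ?s = "1 - one_minus_pow d"
  have s0: "?s $ 0 = 0" by (simp add: one_minus_pow_nth)
  have mX0: "(- fps_X :: real fps) $ 0 = 0" by simp
  have h0: "(fps_binomial d - 1) $ 0 = 0" by simp
  have "- fps_X oo ?s = (fps_binomial d - 1) oo (- fps_X)"
    by (simp add: fps_compose_uminus fps_X_fps_compose_startby0[OF s0] fps_compose_sub_distrib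
        one_minus_pow_def)
  moreover have "one_minus_pow p oo ?s = fps_binomial p oo (- fps_X oo ?s)"
    unfolding one_minus_pow_def[of p] by (rule fps_compose_assoc[OF s0 mX0, symmetric])
  ultimately have "one_minus_pow p oo ?s = fps_binomial p oo ((fps_binomial d - 1) oo (- fps_X))"
    by simp
  also have "\<dots> = (fps_binomial p oo (fps_binomial d - 1)) oo (- fps_X)"
    by (simp add: fps_compose_assoc[OF mX0 h0])
  finally show ?thesis
    by (simp add: fps_binomial_compose_binomial_minus_one one_minus_pow_def)
qed

lemma Pgen_eq_compose:
  assumes "b' \<noteq> 0"
  shows "Pgen a b x
       = one_minus_pow (a - (a' / b') * b) * (Pgen a' b' x oo (1 - one_minus_pow (b / b')))"
proof -
  let ?s = "1 - one_minus_pow (b / b')"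
  have s0: "?s $ 0 = 0" by (simp add: one_minus_pow_nth)
  have q0: "(one_minus_pow b' - 1) $ 0 = 0" by (simp add: one_minus_pow_nth)
  have "(one_minus_pow b' - 1) oo ?s = one_minus_pow b - 1"
    using assms by (simp add: fps_compose_sub_distrib one_minus_pow_compose)
  then have "Pgen a' b' x oo ?s
      = one_minus_pow (a' * (b / b')) * (fps_exp x oo (one_minus_pow b - 1))"
    unfolding Pgen_def
    by (simp add: fps_compose_mult_distrib[OF s0] one_minus_pow_compose
        fps_compose_assoc[OF s0 q0, symmetric])
  moreover have "one_minus_pow (a - (a' / b') * b) * one_minus_pow (a' * (b / b')) = one_minus_pow a"
    by (simp add: one_minus_pow_add[symmetric])
  ultimately show ?thesis
    by (simp add: Pgen_def mult.assoc[symmetric])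
qed

lemma fps_minus_one_power: "(-1 :: 'a::comm_ring_1 fps) ^ i = fps_const ((-1) ^ i)"
  by (induction i) (simp_all add: fps_const_mult[symmetric] del: fps_const_mult)

lemma one_minus_pow_mult_one_minus_power:
  "one_minus_pow c * (1 - one_minus_pow d) ^ j
     = (\<Sum>i = 0..j. fps_const (real (j choose i) * (-1) ^ i) * one_minus_pow (c + real i * d))"
proof -
  have "(1 - one_minus_pow d) ^ j = (- one_minus_pow d + 1) ^ j"
    by simp
  also have "\<dots> = (\<Sum>i = 0..j. of_nat (j choose i) * (- one_minus_pow d) ^ i)"
    using binomial_ring[of "- one_minus_pow d" 1 j] by (simp add: atMost_atLeast0)
  also have "\<dots> = (\<Sum>i = 0..j. fps_const (real (j choose i) * (-1) ^ i) * one_minus_pow (real i * d))"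
  proof (intro sum.cong refl)
    fix i
    have "(- one_minus_pow d) ^ i = fps_const ((-1) ^ i) * one_minus_pow (real i * d)"
      by (simp only: power_minus[of "one_minus_pow d"] fps_minus_one_power one_minus_pow_power)
    then show "of_nat (j choose i) * (- one_minus_pow d) ^ i
        = fps_const (real (j choose i) * (-1) ^ i) * one_minus_pow (real i * d)"
      by (simp add: fps_of_nat[symmetric] mult.assoc)
  qed
  finally show ?thesis
    by (simp add: sum_distrib_left one_minus_pow_add mult.left_commute)
qed

lemma fps_nth_one_minus_pow_mult_one_minus_power:
  "fact n * (one_minus_pow c * (1 - one_minus_pow d) ^ j) $ n = (-1) ^ j * genS c d n j * fact j"
proof -
  have "fact n * (one_minus_pow c * (1 - one_minus_pow d) ^ j) $ n
      = (\<Sum>i = 0..j. (-1) ^ i * real (j choose i) * pochhammer (- c - d * real i) n)"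
    by (simp add: one_minus_pow_mult_one_minus_power fps_sum_nth one_minus_pow_nth
        sum_distrib_left algebra_simps)
  also have "\<dots> = (-1) ^ j * (\<Sum>i = 0..j. (-1) ^ (j - i) * real (j choose i) * pochhammer (- c - d * real i) n)"
    unfolding sum_distrib_left
  proof (intro sum.cong refl)
    fix i assume "i \<in> {0..j}"
    then have "(-1::real) ^ i = (-1) ^ j * (-1) ^ (j - i)"
      by (metis atLeastAtMost_iff diff_diff_cancel diff_le_self neg_one_power_add_eq_neg_one_power_diff power_add)
    then show "(-1) ^ i * real (j choose i) * pochhammer (- c - d * real i) n
        = (-1) ^ j * ((-1) ^ (j - i) * real (j choose i) * pochhammer (- c - d * real i) n)"
      by (simp only: mult.assoc)
  qed
  finally show ?thesis
    by (simp add: genS_def)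
qed

lemma Ppoly_eq_sum_genS:
  assumes "b' \<noteq> 0"
  shows "Ppoly n a b x = (\<Sum>j = 0..n. (-1) ^ j * genS (a - (a' / b') * b) (b / b') n j * Ppoly j a' b' x)"
proof -
  let ?c = "a - (a' / b') * b" and ?d = "b / b'"
  have s0: "(1 - one_minus_pow ?d) $ 0 = 0" by (simp add: one_minus_pow_nth)
  have "Ppoly n a b x = fact n * (one_minus_pow ?c * (Pgen a' b' x oo (1 - one_minus_pow ?d))) $ n"
    unfolding Ppoly_def using Pgen_eq_compose[OF assms] by simp
  also have "\<dots> = (\<Sum>j = 0..n. Pgen a' b' x $ j * (fact n * (one_minus_pow ?c * (1 - one_minus_pow ?d) ^ j) $ n))"
    unfolding fps_nth_mult_compose[OF s0] sum_distrib_left by (simp add: mult_ac)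
  finally show ?thesis
    unfolding fps_nth_one_minus_pow_mult_one_minus_power Ppoly_def by (simp add: mult_ac)
qed

lemma one_minus_one_minus_pow_minus_one_power:
  "(1 - one_minus_pow (-1)) ^ j = fps_const ((-1) ^ j) * (fps_X ^ j * one_minus_pow (- real j))"
proof -
  have "(1 - fps_X) * one_minus_pow (-1) = 1"
    using one_minus_pow_add[of 1 "-1"]
    by (simp add: one_minus_pow_def fps_binomial_1 fps_compose_add_distrib)
  then have "1 - one_minus_pow (-1) = - (fps_X * one_minus_pow (-1))"
    by (simp add: algebra_simps)
  then show ?thesis
    by (simp only: power_minus[of "fps_X * one_minus_pow (-1)"] fps_minus_one_power
        power_mult_distrib one_minus_pow_power mult_minus1_right)
qed

lemma Lah_mult_fact:
  assumes "j \<le> n"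
  shows "Lah n j * fact j = fact n * pochhammer (real j) (n - j) / fact (n - j)"
proof (cases "j = 0")
  case True
  then show ?thesis by (simp add: Lah_def pochhammer_0_left)
next
  case False
  have "fact (n - 1) = (pochhammer 1 ((j - 1) + (n - j)) :: real)"
    using False assms by (simp add: pochhammer_fact)
  also have "\<dots> = pochhammer 1 (j - 1) * pochhammer (1 + of_nat (j - 1)) (n - j)"
    by (rule pochhammer_product')
  also have "\<dots> = fact (j - 1) * pochhammer (real j) (n - j)"
    using False by (simp add: pochhammer_fact of_nat_diff)
  finally have poch: "pochhammer (real j) (n - j) = fact (n - 1) / fact (j - 1)"
    by (simp add: field_simps)
  have binom: "real ((n - 1) choose (j - 1)) = fact (n - 1) / (fact (j - 1) * fact (n - j))"
    using binomial_fact[of "j - 1" "n - 1", where 'a = real] False assms by simp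
  have "Lah n j = real ((n - 1) choose (j - 1)) * fact n / fact j"
    using False assms by (simp add: Lah_def)
  then show ?thesis
    unfolding poch binom by (simp add: field_simps)
qed

lemma genS_0_minus_one:
  assumes "j \<le> n"
  shows "genS 0 (-1) n j = Lah n j"
proof -
  have "(-1) ^ j * genS 0 (-1) n j * fact j = (-1) ^ j * (fact n * pochhammer (real j) (n - j) / fact (n - j))"
    using fps_nth_one_minus_pow_mult_one_minus_power[of n 0 "-1" j] assms
    by (simp add: one_minus_one_minus_pow_minus_one_power fps_X_power_mult_nth one_minus_pow_nth
        mult_ac)
  then show ?thesis
    by (simp add: Lah_mult_fact[OF assms, symmetric])
qed

theorem proposition5:
  fixes a b a' b' x :: real and n :: nat
  assumes "b \<noteq> 0" and "b' \<noteq> 0"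
  shows "Ppoly n a b x =
           (\<Sum>j = 0..n. (-1) ^ j * genS (a - (a' / b') * b) (b / b') n j * Ppoly j a' b' x)
       \<and> Ppoly n a b x = (\<Sum>j = 0..n. (-1) ^ j * Lah n j * Ppoly j (- a) (- b) x)"
proof
  show "Ppoly n a b x =
          (\<Sum>j = 0..n. (-1) ^ j * genS (a - (a' / b') * b) (b / b') n j * Ppoly j a' b' x)"
    using Ppoly_eq_sum_genS[OF assms(2)] .
  have "a - (- a / - b) * b = 0" "b / - b = -1"
    using assms(1) by auto
  then show "Ppoly n a b x = (\<Sum>j = 0..n. (-1) ^ j * Lah n j * Ppoly j (- a) (- b) x)"
    using Ppoly_eq_sum_genS[of "- b" n a b x "- a"] assms(1) by (simp add: genS_0_minus_one)
qed

end
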